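(* Let $(M,d)$ be a complete geodesic space and $f:M\to\mathbb R$ a function. (1) If $f$ is geodesically $\beta$-expconcave for some $\beta>0$, then $f$ is geodesically convex. (2) If $f$ is geodesically $\alpha$-convex and $L$-Lipschitz for some $\alpha,L>0$, then $f$ is geodesically $\beta$-expconcave for every $0<\beta\le \alpha/L^2$.
   Context: A geodesic in a metric space $(M,d)$ is a path $\gamma:[0,1]\to M$ with $d(\gamma(s),\gamma(t))=|t-s|\,d(\gamma(0),\gamma(1))$ for all $s,t\in[0,1]$. $(M,d)$ is a geodesic space if any two points $x,y\in M$ are connected by a geodesic ($\gamma(0)=x,\gamma(1)=y$). For $\alpha\in\mathbb R$, $f:M\to\mathbb R$ is geodesically $\alpha$-convex if for every geodesic $\gamma:[0,1]\to M$ the function $t\in[0,1]\mapsto f(\gamma(t))-\frac{\alpha}{2}d^2(\gamma(0),\gamma(t))$ is convex; $f$ is geodesically convex if it is geodesically $0$-convex, and geodesically concave if $-f$ is geodesically convex. For $\beta>0$, $f$ is geodesically $\beta$-expconcave if $\exp(-\beta f)$ is geodesically concave. *)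

theory Defs
  imports "HOL-Analysis.Analysis"
begin

definition geodesic :: "(real \<Rightarrow> 'a::metric_space) \<Rightarrow> bool" where
  "geodesic \<gamma> \<longleftrightarrow>
     (\<forall>s\<in>{0..1}. \<forall>t\<in>{0..1}. dist (\<gamma> s) (\<gamma> t) = \<bar>t - s\<bar> * dist (\<gamma> 0) (\<gamma> 1))"

definition geodesic_space :: "'a::metric_space itself \<Rightarrow> bool" where
  "geodesic_space _ \<longleftrightarrow>
     (\<forall>x y :: 'a. \<exists>\<gamma>. geodesic \<gamma> \<and> \<gamma> 0 = x \<and> \<gamma> 1 = y)"

definition geod_alpha_convex :: "real \<Rightarrow> ('a::metric_space \<Rightarrow> real) \<Rightarrow> bool" where
  "geod_alpha_convex \<alpha> f \<longleftrightarrow>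
     (\<forall>\<gamma>. geodesic \<gamma> \<longrightarrow>
        convex_on {0..1} (\<lambda>t. f (\<gamma> t) - \<alpha> / 2 * (dist (\<gamma> 0) (\<gamma> t))\<^sup>2))"

definition geod_convex :: "('a::metric_space \<Rightarrow> real) \<Rightarrow> bool" where
  "geod_convex f \<longleftrightarrow> geod_alpha_convex 0 f"

definition geod_concave :: "('a::metric_space \<Rightarrow> real) \<Rightarrow> bool" where
  "geod_concave f \<longleftrightarrow> geod_convex (\<lambda>x. - f x)"

definition geod_expconcave :: "real \<Rightarrow> ('a::metric_space \<Rightarrow> real) \<Rightarrow> bool" where
  "geod_expconcave \<beta> f \<longleftrightarrow> geod_concave (\<lambda>x. exp (- \<beta> * f x))"

end

theory Submission
  imports Defs
begin

text \<open>
  (1) Along a geodesic, convexity of \<open>exp\<close> (Jensen) combined with concavity of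
  \<open>exp (-\<beta> f)\<close> gives \<open>exp (-\<beta> f z) \<ge> exp (-\<beta> ((1 - t) f x + t f y))\<close>, and \<open>exp\<close> is monotone.

  (2) On a geodesic of length \<open>D\<close>, \<open>h = f \<circ> \<gamma>\<close> is an \<open>\<alpha>D\<^sup>2\<close>-strongly convex,
  \<open>LD\<close>-Lipschitz real function. At \<open>z = (1 - t) x + t y\<close>, the increments
  \<open>a = \<beta> (h x - h z)\<close> and \<open>b = \<beta> (h y - h z)\<close> are bounded by the Lipschitz
  condition, while strong convexity bounds \<open>(1 - t) a + t b\<close> from below. Under these
  constraints the worst case of \<open>(1 - t) e\<^sup>-\<^sup>a + t e\<^sup>-\<^sup>b\<close> is a convex function of one
  parameter, so it suffices to check the two extreme configurations, which are
  elementary exponential inequalities.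
\<close>

lemma exp_minus_le_quadratic:
  fixes u :: real
  assumes "0 \<le> u"
  shows "exp (- u) \<le> 1 - u + u\<^sup>2 / 2"
proof -
  let ?g = "\<lambda>x. exp x * (1 - x + x\<^sup>2 / 2)"
  have "?g 0 \<le> ?g u"
  proof (rule DERIV_nonneg_imp_nondecreasing[OF assms])
    fix x :: real
    have "DERIV ?g x :> exp x * (x\<^sup>2 / 2)"
      by (auto intro!: derivative_eq_intros simp: algebra_simps power2_eq_square)
    then show "\<exists>y. DERIV ?g x :> y \<and> 0 \<le> y"
      by auto
  qed
  then show ?thesis
    by (simp add: exp_minus field_simps)
qed

lemma ln_one_plus_ge_quadratic:
  fixes m :: real
  assumes "0 \<le> m"
  shows "m - m\<^sup>2 / 2 \<le> ln (1 + m)"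
proof -
  let ?g = "\<lambda>x. ln (1 + x) - x + x\<^sup>2 / 2"
  have "?g 0 \<le> ?g m"
  proof (rule DERIV_nonneg_imp_nondecreasing[OF assms])
    fix x :: real
    assume "0 \<le> x"
    then have "DERIV ?g x :> x\<^sup>2 / (1 + x)" "0 \<le> x\<^sup>2 / (1 + x)"
      by (auto intro!: derivative_eq_intros simp: field_simps power2_eq_square)
    then show "\<exists>y. DERIV ?g x :> y \<and> 0 \<le> y"
      by blast
  qed
  then show ?thesis
    by simp
qed

lemma exp_two_point_bound:
  fixes u v :: real
  assumes u: "0 \<le> u" and v: "0 \<le> v"
  shows "v * exp (- u) + u * exp (v * (1 - (u + v) / 2)) \<le> u + v"
proof (cases "u \<le> 2")
  case True
  define m where "m = v * (1 - u / 2)"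
  have m: "0 \<le> m" "m \<le> v"
    using mult_right_mono[OF True v] u v by (simp_all add: m_def algebra_simps)
  then have "v * (1 - (u + v) / 2) \<le> m - m\<^sup>2 / 2"
    using power_mono[of m v 2] by (simp add: m_def algebra_simps power2_eq_square)
  also have "\<dots> \<le> ln (1 + m)"
    using m(1) by (rule ln_one_plus_ge_quadratic)
  finally have "exp (v * (1 - (u + v) / 2)) \<le> 1 + m"
    using m(1) by (metis exp_le_cancel_iff exp_ln add_pos_nonneg zero_less_one)
  then have "u * exp (v * (1 - (u + v) / 2)) \<le> u * (1 + m)"
    using u by (rule mult_left_mono)
  moreover have "v * exp (- u) \<le> v * (1 - u + u\<^sup>2 / 2)"
    using exp_minus_le_quadratic[OF u] v by (rule mult_left_mono)
  moreover have "u * (1 + m) + v * (1 - u + u\<^sup>2 / 2) = u + v"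
    by (simp add: m_def algebra_simps power2_eq_square)
  ultimately show ?thesis
    by linarith
next
  case False
  then have "exp (v * (1 - (u + v) / 2)) \<le> 1"
    using u v by (simp add: mult_nonneg_nonpos)
  then have "u * exp (v * (1 - (u + v) / 2)) \<le> u"
    using u by (simp add: mult_left_le)
  moreover have "v * exp (- u) \<le> v"
    using u v by (simp add: mult_left_le)
  ultimately show ?thesis
    by linarith
qed

lemma weighted_exp_sum_le:
  fixes L1 L2 a b :: real
  assumes L: "0 < L1" "0 < L2" and ab: "\<bar>a\<bar> \<le> L1" "\<bar>b\<bar> \<le> L2"
    and lower: "L1 * L2 * (L1 + L2) / 2 \<le> L2 * a + L1 * b"
  shows "L2 * exp (- a) + L1 * exp (- b) \<le> L1 + L2"
proof -
  define s where "s = (L1 + L2) / 2"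
  define y where "y = b / L2"
  define \<Phi> where "\<Phi> = (\<lambda>y. L2 * exp (L1 * (y - s)) + L1 * exp (- (L2 * y)))"
  have b: "b = L2 * y"
    using L by (simp add: y_def)
  have "L2 * (L1 * s) \<le> L2 * (a + L1 * y)"
    using lower by (simp add: s_def b algebra_simps)
  then have "L1 * s \<le> a + L1 * y"
    using L(2) by (simp only: mult_le_cancel_left_pos)
  then have a: "L1 * (s - y) \<le> a"
    by (simp add: algebra_simps)
  then have "L1 * (s - y) \<le> L1 * 1"
    using ab(1) by linarith
  then have "s - 1 \<le> y"
    using L(1) by simp
  moreover have "y \<le> 1"
    using ab L by (simp add: y_def abs_le_iff)
  ultimately have y: "y \<in> {s - 1..1}"
    by simp
  text \<open>For fixed \<open>b\<close>, the worst admissible \<open>a\<close> is \<open>L1 (s - y)\<close>.\<close>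
  have "L2 * exp (- a) + L1 * exp (- b) \<le> \<Phi> y"
    using a L by (simp add: \<Phi>_def b algebra_simps)
  also have "\<dots> \<le> max (\<Phi> (s - 1)) (\<Phi> 1)"
  proof (rule convex_on_le_max[OF _ y])
    have "convex_on UNIV \<Phi>"
    proof (rule convex_on_realI)
      show "(\<Phi> has_real_derivative
          L1 * L2 * exp (L1 * (y - s)) - L1 * L2 * exp (- (L2 * y))) (at y)" for y
        unfolding \<Phi>_def by (auto intro!: derivative_eq_intros simp: algebra_simps)
    qed (use L in \<open>auto intro!: diff_mono\<close>)
    then show "convex_on {s - 1..1} \<Phi>"
      by (rule convex_on_subset) auto
  qed
  also have "\<dots> \<le> L1 + L2"
  proof -
    have "\<Phi> (s - 1) = L2 * exp (- L1) + L1 * exp (L2 * (1 - (L1 + L2) / 2))"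
      by (simp add: \<Phi>_def s_def algebra_simps)
    moreover have "\<Phi> 1 = L1 * exp (- L2) + L2 * exp (L1 * (1 - (L2 + L1) / 2))"
      by (simp add: \<Phi>_def s_def algebra_simps)
    ultimately show ?thesis
      using exp_two_point_bound[of L1 L2] exp_two_point_bound[of L2 L1] L by simp
  qed
  finally show ?thesis .
qed

lemma convex_comb_exp_minus_le_one:
  fixes p t a b :: real
  assumes p: "0 \<le> p" and t: "0 < t" "t < 1"
    and ab: "\<bar>a\<bar> \<le> p * t" "\<bar>b\<bar> \<le> p * (1 - t)"
    and lower: "p\<^sup>2 * (t * (1 - t)) / 2 \<le> (1 - t) * a + t * b"
  shows "(1 - t) * exp (- a) + t * exp (- b) \<le> 1"
proof (cases "p = 0")
  case True
  then show ?thesis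
    using ab by simp
next
  case False
  then have p: "0 < p"
    using p by simp
  have "p * t * (p * (1 - t)) * (p * t + p * (1 - t)) / 2 = p * (p\<^sup>2 * (t * (1 - t)) / 2)"
    by (simp add: algebra_simps power2_eq_square)
  also have "\<dots> \<le> p * ((1 - t) * a + t * b)"
    using lower p by simp
  finally have "p * (1 - t) * exp (- a) + p * t * exp (- b) \<le> p * t + p * (1 - t)"
    using weighted_exp_sum_le[of "p * t" "p * (1 - t)" a b] p t ab by (simp add: algebra_simps)
  then have "p * ((1 - t) * exp (- a) + t * exp (- b)) \<le> p * 1"
    by (simp add: algebra_simps)
  then show ?thesis
    using p by simp
qed

lemma convex_on_minus_quadratic_gap:
  fixes h :: "real \<Rightarrow> real"
  assumes conv: "convex_on I (\<lambda>t. h t - c / 2 * t\<^sup>2)"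
    and xy: "x \<in> I" "y \<in> I" and t: "0 \<le> t" "t \<le> 1"
  shows "c / 2 * (t * (1 - t) * (y - x)\<^sup>2) \<le> (1 - t) * h x + t * h y - h ((1 - t) * x + t * y)"
proof -
  define z where "z = (1 - t) * x + t * y"
  have "h z - c / 2 * z\<^sup>2 \<le> (1 - t) * (h x - c / 2 * x\<^sup>2) + t * (h y - c / 2 * y\<^sup>2)"
    using convex_onD[OF conv, of t x y] xy t by (simp add: z_def)
  then have "c / 2 * ((1 - t) * x\<^sup>2 + t * y\<^sup>2 - z\<^sup>2) \<le> (1 - t) * h x + t * h y - h z"
    by (simp add: field_simps)
  moreover have "(1 - t) * x\<^sup>2 + t * y\<^sup>2 - z\<^sup>2 = t * (1 - t) * (y - x)\<^sup>2"
    by (simp add: z_def power2_eq_square algebra_simps)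
  ultimately show ?thesis
    by (simp add: z_def)
qed

lemma convex_on_neg_exp_if_strongly_convex_lipschitz:
  fixes h :: "real \<Rightarrow> real"
  assumes I: "convex I" and conv: "convex_on I (\<lambda>t. h t - c / 2 * t\<^sup>2)"
    and lip: "K-lipschitz_on I h" and \<beta>: "0 < \<beta>" and \<beta>K: "\<beta> * K\<^sup>2 \<le> c"
  shows "convex_on I (\<lambda>t. - exp (- \<beta> * h t))"
proof (rule convex_on_linorderI[OF _ I])
  fix t x y :: real
  assume t: "0 < t" "t < 1" and xy: "x \<in> I" "y \<in> I" "x < y"
  define z where "z = (1 - t) * x + t * y"
  define a where "a = \<beta> * (h x - h z)"
  define b where "b = \<beta> * (h y - h z)"
  define p where "p = \<beta> * K * (y - x)"
  have K: "0 \<le> K"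
    using lip by (rule lipschitz_on_nonneg)
  have z: "z \<in> I"
    using convexD[OF I xy(1,2), of "1 - t" t] t by (simp add: z_def)
  have "z - x = t * (y - x)" "y - z = (1 - t) * (y - x)"
    by (simp_all add: z_def algebra_simps)
  moreover have "0 \<le> t * (y - x)" "0 \<le> (1 - t) * (y - x)"
    using t xy(3) by simp_all
  ultimately have "dist x z = t * (y - x)" "dist y z = (1 - t) * (y - x)"
    by (simp_all add: dist_real_def abs_minus_commute[of x z])
  then have "\<bar>h x - h z\<bar> \<le> K * (t * (y - x))" "\<bar>h y - h z\<bar> \<le> K * ((1 - t) * (y - x))"
    using lipschitz_onD[OF lip xy(1) z] lipschitz_onD[OF lip xy(2) z] by (simp_all add: dist_real_def)
  then have "\<beta> * \<bar>h x - h z\<bar> \<le> \<beta> * (K * (t * (y - x)))"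
    "\<beta> * \<bar>h y - h z\<bar> \<le> \<beta> * (K * ((1 - t) * (y - x)))"
    using \<beta> by (simp_all add: mult_left_mono)
  then have ab: "\<bar>a\<bar> \<le> p * t" "\<bar>b\<bar> \<le> p * (1 - t)"
    using \<beta> by (simp_all add: a_def b_def p_def abs_mult mult_ac)
  have gap: "c / 2 * (t * (1 - t) * (y - x)\<^sup>2) \<le> (1 - t) * h x + t * h y - h z"
    using convex_on_minus_quadratic_gap[OF conv xy(1,2)] t by (simp add: z_def)
  have "p\<^sup>2 * (t * (1 - t)) / 2 = \<beta> * (\<beta> * K\<^sup>2 / 2 * (t * (1 - t) * (y - x)\<^sup>2))"
    by (simp add: p_def power_mult_distrib power2_eq_square)
  also have "\<dots> \<le> \<beta> * (c / 2 * (t * (1 - t) * (y - x)\<^sup>2))"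
    using \<beta>K \<beta> t by (intro mult_left_mono mult_right_mono) auto
  also have "\<dots> \<le> \<beta> * ((1 - t) * h x + t * h y - h z)"
    using gap \<beta> by simp
  also have "\<dots> = (1 - t) * a + t * b"
    by (simp add: a_def b_def algebra_simps)
  finally have "(1 - t) * exp (- a) + t * exp (- b) \<le> 1"
    using convex_comb_exp_minus_le_one[OF _ t ab] \<beta> K xy(3) by (simp add: p_def)
  then have "((1 - t) * exp (- a) + t * exp (- b)) * exp (- \<beta> * h z) \<le> exp (- \<beta> * h z)"
    by simp
  moreover have "exp (- \<beta> * h x) = exp (- a) * exp (- \<beta> * h z)"
    "exp (- \<beta> * h y) = exp (- b) * exp (- \<beta> * h z)"
    by (simp_all add: a_def b_def algebra_simps flip: exp_add)
  ultimately show "- exp (- \<beta> * h ((1 - t) *\<^sub>R x + t *\<^sub>R y))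
      \<le> (1 - t) * - exp (- \<beta> * h x) + t * - exp (- \<beta> * h y)"
    by (simp add: z_def algebra_simps)
qed

lemma convex_on_if_convex_on_neg_exp:
  fixes u :: "'a::real_vector \<Rightarrow> real"
  assumes \<beta>: "0 < \<beta>" and conv: "convex_on S (\<lambda>x. - exp (- \<beta> * u x))"
  shows "convex_on S u"
proof (rule convex_onI)
  fix t :: real and x y
  assume t: "0 < t" "t < 1" and xy: "x \<in> S" "y \<in> S"
  let ?z = "(1 - t) *\<^sub>R x + t *\<^sub>R y"
  have "exp ((1 - t) * (- \<beta> * u x) + t * (- \<beta> * u y))
      \<le> (1 - t) * exp (- \<beta> * u x) + t * exp (- \<beta> * u y)"
    using convex_onD[OF exp_convex, of t "- \<beta> * u x" "- \<beta> * u y"] t by simp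
  also have "\<dots> \<le> exp (- \<beta> * u ?z)"
    using convex_onD[OF conv, of t x y] t xy by simp
  finally have "\<beta> * u ?z \<le> \<beta> * ((1 - t) * u x + t * u y)"
    by (simp add: algebra_simps)
  then show "u ?z \<le> (1 - t) * u x + t * u y"
    using \<beta> by simp
qed (rule convex_on_imp_convex[OF conv])

lemma convex_on_cong:
  assumes "convex_on S f" and "\<And>x. x \<in> S \<Longrightarrow> f x = g x"
  shows "convex_on S g"
proof (rule convex_onI)
  fix t :: real and x y
  assume t: "0 < t" "t < 1" and xy: "x \<in> S" "y \<in> S"
  have "(1 - t) *\<^sub>R x + t *\<^sub>R y \<in> S"
    using convexD[OF convex_on_imp_convex[OF assms(1)] xy, of "1 - t" t] t by simp
  then show "g ((1 - t) *\<^sub>R x + t *\<^sub>R y) \<le> (1 - t) * g x + t * g y"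
    using convex_onD[OF assms(1), of t x y] t xy assms(2) by simp
qed (rule convex_on_imp_convex[OF assms(1)])

lemma geodesic_dist:
  assumes "geodesic \<gamma>" and "s \<in> {0..1}" "t \<in> {0..1}"
  shows "dist (\<gamma> s) (\<gamma> t) = \<bar>t - s\<bar> * dist (\<gamma> 0) (\<gamma> 1)"
  using assms unfolding geodesic_def by blast

lemma geodesic_lipschitz:
  assumes "geodesic \<gamma>"
  shows "(dist (\<gamma> 0) (\<gamma> 1))-lipschitz_on {0..1} \<gamma>"
proof (rule lipschitz_onI)
  fix s t :: real
  assume "s \<in> {0..1}" "t \<in> {0..1}"
  then show "dist (\<gamma> s) (\<gamma> t) \<le> dist (\<gamma> 0) (\<gamma> 1) * dist s t"
    using geodesic_dist[OF assms, of s t] by (simp add: dist_real_def abs_minus_commute)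
qed simp

lemma geod_expconcave_imp_geod_convex:
  fixes f :: "'a::metric_space \<Rightarrow> real"
  assumes \<beta>: "0 < \<beta>" and exp_concave: "geod_expconcave \<beta> f"
  shows "geod_convex f"
  unfolding geod_convex_def geod_alpha_convex_def
proof (intro allI impI)
  fix \<gamma> :: "real \<Rightarrow> 'a"
  assume "geodesic \<gamma>"
  then have "convex_on {0..1} (\<lambda>t. - exp (- \<beta> * f (\<gamma> t)) - 0 / 2 * (dist (\<gamma> 0) (\<gamma> t))\<^sup>2)"
    using exp_concave
    unfolding geod_expconcave_def geod_concave_def geod_convex_def geod_alpha_convex_def by blast
  then have "convex_on {0..1} (\<lambda>t. - exp (- \<beta> * f (\<gamma> t)))"
    by simp
  then have "convex_on {0..1} (\<lambda>t. f (\<gamma> t))"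
    by (rule convex_on_if_convex_on_neg_exp[OF \<beta>])
  then show "convex_on {0..1} (\<lambda>t. f (\<gamma> t) - 0 / 2 * (dist (\<gamma> 0) (\<gamma> t))\<^sup>2)"
    by simp
qed

lemma geod_alpha_convex_lipschitz_imp_geod_expconcave:
  fixes f :: "'a::metric_space \<Rightarrow> real"
  assumes \<alpha>: "geod_alpha_convex \<alpha> f" and lip: "L-lipschitz_on UNIV f"
    and \<beta>: "0 < \<beta>" "\<beta> * L\<^sup>2 \<le> \<alpha>"
  shows "geod_expconcave \<beta> f"
  unfolding geod_expconcave_def geod_concave_def geod_convex_def geod_alpha_convex_def
proof (intro allI impI)
  fix \<gamma> :: "real \<Rightarrow> 'a"
  assume \<gamma>: "geodesic \<gamma>"
  define D where "D = dist (\<gamma> 0) (\<gamma> 1)"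
  have "convex_on {0..1} (\<lambda>t. f (\<gamma> t) - \<alpha> / 2 * (dist (\<gamma> 0) (\<gamma> t))\<^sup>2)"
    using \<alpha> \<gamma> unfolding geod_alpha_convex_def by blast
  moreover have "dist (\<gamma> 0) (\<gamma> t) = t * D" if "t \<in> {0..1}" for t
    using geodesic_dist[OF \<gamma>, of 0 t] that by (simp add: D_def)
  ultimately have strongly_convex: "convex_on {0..1} (\<lambda>t. f (\<gamma> t) - \<alpha> * D\<^sup>2 / 2 * t\<^sup>2)"
    by (elim convex_on_cong) (simp add: power_mult_distrib)
  have lipschitz: "(L * D)-lipschitz_on {0..1} (\<lambda>t. f (\<gamma> t))"
    using lipschitz_on_compose2[OF geodesic_lipschitz[OF \<gamma>] lipschitz_on_subset[OF lip]]
    by (simp add: D_def)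
  have "\<beta> * (L * D)\<^sup>2 \<le> \<alpha> * D\<^sup>2"
    using mult_right_mono[OF \<beta>(2), of "D\<^sup>2"] by (simp add: power_mult_distrib)
  with strongly_convex lipschitz \<beta>(1)
  have "convex_on {0..1} (\<lambda>t. - exp (- \<beta> * f (\<gamma> t)))"
    by (intro convex_on_neg_exp_if_strongly_convex_lipschitz) auto
  then show "convex_on {0..1} (\<lambda>t. - exp (- \<beta> * f (\<gamma> t)) - 0 / 2 * (dist (\<gamma> 0) (\<gamma> t))\<^sup>2)"
    by simp
qed

theorem lemma1:
  fixes f :: "'a::{metric_space, complete_space} \<Rightarrow> real"
  assumes "geodesic_space TYPE('a)"
  shows "(\<forall>\<beta>>0. geod_expconcave \<beta> f \<longrightarrow> geod_convex f)
    \<and> (\<forall>\<alpha> L. \<alpha> > 0 \<and> L > 0 \<and> geod_alpha_convex \<alpha> f \<and> L-lipschitz_on UNIV f \<longrightarrow>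
          (\<forall>\<beta>. 0 < \<beta> \<and> \<beta> \<le> \<alpha> / L\<^sup>2 \<longrightarrow> geod_expconcave \<beta> f))"
proof (intro conjI allI impI)
  show "geod_convex f" if "0 < \<beta>" "geod_expconcave \<beta> f" for \<beta>
    using that by (rule geod_expconcave_imp_geod_convex)
next
  fix \<alpha> L \<beta> :: real
  assume "0 < \<alpha> \<and> 0 < L \<and> geod_alpha_convex \<alpha> f \<and> L-lipschitz_on UNIV f"
    and "0 < \<beta> \<and> \<beta> \<le> \<alpha> / L\<^sup>2"
  then show "geod_expconcave \<beta> f"
    by (intro geod_alpha_convex_lipschitz_imp_geod_expconcave) (auto simp: field_simps)
qed

end
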